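(* Let $e_1,e_2,e_3$ be nonzero integers with $e_1+e_2+e_3=0$. Let $\Lambda=(d_1,d_2,d_3)$ be a triple of nonzero square-free integers with $d_1d_2d_3$ a square. Let $n$ be a positive square-free integer coprime with $e_1e_2e_3$ and $p$ an odd prime factor of $n$. Then $D^{(n)}_\Lambda(\mathbb{Q}_p)\neq\emptyset$ if and only if - $\left(\frac{d_1}{p}\right)=\left(\frac{d_2}{p}\right)=\left(\frac{d_3}{p}\right)=1$, in case $p\nmid d_1d_2d_3$; - $\left(\frac{-e_2e_3d_1}{p}\right)=\left(\frac{e_3n/d_2}{p}\right)=\left(\frac{-e_2n/d_3}{p}\right)=1$, in case $p\nmid d_1$, $p\mid d_2$, $p\mid d_3$; - $\left(\frac{-e_3n/d_1}{p}\right)=\left(\frac{-e_3e_1d_2}{p}\right)=\left(\frac{e_1n/d_3}{p}\right)=1$, in case $p\mid d_1$, $p\nmid d_2$, $p\mid d_3$; - $\left(\frac{e_2n/d_1}{p}\right)=\left(\frac{-e_1n/d_2}{p}\right)=\left(\frac{-e_1e_2d_3}{p}\right)=1$, in case $p\mid d_1$, $p\mid d_2$, $p\nmid d_3$.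
   Context: $D^{(n)}_\Lambda$ is the curve in $\mathbb{P}^3$ with coordinates $(t,u_1,u_2,u_3)$ defined by $e_1nt^2+d_2u_2^2-d_3u_3^2=0$, $e_2nt^2+d_3u_3^2-d_1u_1^2=0$, $e_3nt^2+d_1u_1^2-d_2u_2^2=0$. For a rational number $r$ which is a $p$-adic unit, $\left(\frac{r}{p}\right)$ is the Legendre symbol of its reduction modulo $p$ (so the arguments $n/d_i$ above, with $p\mid d_i$, are $p$-adic units). *)

theory Defs
  imports "HOL-Number_Theory.Number_Theory" "HOL-Computational_Algebra.Squarefree"
begin

text \<open>p-adic integers modelled as the inverse limit of the rings Z/p^k:
  a compatible sequence of residues x k in {0..<p^k}.\<close>
definition padic_int :: "int \<Rightarrow> (nat \<Rightarrow> int) \<Rightarrow> bool" where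
  "padic_int p x \<longleftrightarrow> (\<forall>k. 0 \<le> x k \<and> x k < p ^ k) \<and> (\<forall>k. [x (Suc k) = x k] (mod p ^ k))"

definition padic_unit :: "int \<Rightarrow> (nat \<Rightarrow> int) \<Rightarrow> bool" where
  "padic_unit p x \<longleftrightarrow> \<not> [x 1 = 0] (mod p)"

text \<open>Q_p-points of the curve D^(n)_Lambda in P^3 with coordinates (t,u1,u2,u3).
  Every point of P^3(Q_p) has a representative in Z_p^4 with some coordinate a unit;
  the homogeneous equations hold in Z_p iff they hold modulo every p^k.\<close>
definition D_has_Qp_point :: "int \<Rightarrow> int \<Rightarrow> int \<Rightarrow> int \<Rightarrow> int \<Rightarrow> int \<Rightarrow> int \<Rightarrow> int \<Rightarrow> bool" where
  "D_has_Qp_point e1 e2 e3 d1 d2 d3 n p \<longleftrightarrow>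
     (\<exists>t u1 u2 u3. padic_int p t \<and> padic_int p u1 \<and> padic_int p u2 \<and> padic_int p u3 \<and>
        (padic_unit p t \<or> padic_unit p u1 \<or> padic_unit p u2 \<or> padic_unit p u3) \<and>
        (\<forall>k. [e1 * n * (t k)^2 + d2 * (u2 k)^2 - d3 * (u3 k)^2 = 0] (mod p ^ k) \<and>
             [e2 * n * (t k)^2 + d3 * (u3 k)^2 - d1 * (u1 k)^2 = 0] (mod p ^ k) \<and>
             [e3 * n * (t k)^2 + d1 * (u1 k)^2 - d2 * (u2 k)^2 = 0] (mod p ^ k)))"

text \<open>Legendre symbol of a rational number r = a/b (b > 0, coprime) that is a p-adic unit:
  the Legendre symbol of a * b^(-1) mod p, which equals that of a * b.\<close>
definition Legendre_rat :: "rat \<Rightarrow> int \<Rightarrow> int" where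
  "Legendre_rat r p = (let (a, b) = quotient_of r in Legendre (a * b) p)"

end

theory Submission
  imports Defs
begin

text \<open>
  A \<open>\<int>\<^sub>p\<close>-point of \<open>D\<close> can be taken primitive, and its equations modulo \<open>p\<^sup>2\<close> already decide
  the question. If \<open>p\<close> does not divide \<open>d\<^sub>1d\<^sub>2d\<^sub>3\<close>, reduction modulo \<open>p\<close> (where \<open>n\<close> vanishes) gives
  \<open>d\<^sub>iu\<^sub>i\<^sup>2 \<equiv> d\<^sub>ju\<^sub>j\<^sup>2\<close>, and all \<open>u\<^sub>i\<close> are units, since otherwise \<open>p\<^sup>2\<close> would divide \<open>e\<^sub>1nt\<^sup>2\<close>
  with \<open>t\<close> a unit. So every \<open>d\<^sub>id\<^sub>j\<close> is a square mod \<open>p\<close>, and as \<open>d\<^sub>1d\<^sub>2d\<^sub>3\<close> is a square, so is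
  every \<open>d\<^sub>i\<close>. If \<open>p\<close> divides \<open>d\<^sub>2\<close> and \<open>d\<^sub>3\<close>, the second equation forces \<open>p\<close> to divide \<open>u\<^sub>1\<close>;
  dividing the last two equations by \<open>p\<close> leaves \<open>e\<^sub>3(n/p)t\<^sup>2 \<equiv> (d\<^sub>2/p)u\<^sub>2\<^sup>2\<close> and
  \<open>-e\<^sub>2(n/p)t\<^sup>2 \<equiv> (d\<^sub>3/p)u\<^sub>3\<^sup>2\<close> with \<open>t, u\<^sub>2, u\<^sub>3\<close> units, and \<open>-e\<^sub>2e\<^sub>3d\<^sub>1\<close> is the product of
  \<open>e\<^sub>3(n/p)(d\<^sub>2/p)\<close> and \<open>-e\<^sub>2(n/p)(d\<^sub>3/p)\<close> up to squares. Conversely, in both cases there are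
  integer values for \<open>t\<^sup>2, u\<^sub>i\<^sup>2\<close> that solve the equations exactly and are squares in \<open>\<int>\<^sub>p\<close> by
  Hensel's lemma. The two remaining cases follow by the cyclic symmetry of the equations.
\<close>

lemma Legendre_eq_1_iff:
  fixes a p :: int
  shows "Legendre a p = 1 \<longleftrightarrow> \<not> p dvd a \<and> (\<exists>y. [y^2 = a] (mod p))"
  unfolding Legendre_def QuadRes_def by (simp add: cong_0_iff)

lemma Legendre_cong:
  fixes a b p :: int
  assumes "[a = b] (mod p)"
  shows "Legendre a p = Legendre b p"
proof -
  have same: "[c = a] (mod p) \<longleftrightarrow> [c = b] (mod p)" for c
    using cong_trans[of c a p b] cong_trans[of c b p a] assms cong_sym[OF assms] by blast
  then have "[a = 0] (mod p) \<longleftrightarrow> [b = 0] (mod p)"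
    by (simp add: cong_sym_eq[of _ 0])
  with same show ?thesis
    unfolding Legendre_def QuadRes_def by simp
qed

lemma Legendre_mult:
  fixes a b p :: int
  assumes "prime p" "2 < p"
  shows "Legendre (a * b) p = Legendre a p * Legendre b p"
proof -
  have p: "p = int (nat p)" "prime (nat p)"
    using assms(1) prime_ge_0_int[of p] prime_int_nat_transfer[of "nat p"] by simp_all
  define h where "h = (nat p - 1) div 2"
  have euler: "[Legendre x p = x ^ h] (mod p)" for x
    using euler_criterion[OF p(2), of x] assms(2) p(1) unfolding h_def by simp
  have "[Legendre (a * b) p = (a * b) ^ h] (mod p)"
    by (rule euler)
  also have "(a * b) ^ h = a ^ h * b ^ h"
    by (rule power_mult_distrib)
  also have "[a ^ h * b ^ h = Legendre a p * Legendre b p] (mod p)"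
    by (intro cong_mult cong_sym[OF euler])
  finally have "p dvd Legendre (a * b) p - Legendre a p * Legendre b p" (is "p dvd ?diff")
    by (simp add: cong_iff_dvd_diff)
  moreover have "\<bar>?diff\<bar> < p"
    using assms(2) by (auto simp: Legendre_def)
  ultimately show ?thesis
    using dvd_imp_le_int[of ?diff p] by fastforce
qed

lemma Legendre_power2:
  fixes k p :: int
  assumes "prime p" "\<not> p dvd k"
  shows "Legendre (k^2) p = 1"
proof -
  have "\<not> [k^2 = 0] (mod p)"
    using assms by (simp add: cong_0_iff prime_dvd_power_iff)
  moreover have "QuadRes p (k^2)"
    unfolding QuadRes_def by (blast intro: cong_refl)
  ultimately show ?thesis
    by (simp add: Legendre_def)
qed

lemma Legendre_mult_power2:
  fixes a k p :: int
  assumes "prime p" "2 < p" "\<not> p dvd k"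
  shows "Legendre (a * k^2) p = Legendre a p"
  using Legendre_mult[OF assms(1,2), of a "k^2"] Legendre_power2[OF assms(1,3)] by simp

lemma Legendre_eq_1_if_cong_square_multiples:
  fixes a b x y p :: int
  assumes p: "prime p" "2 < p" and "\<not> p dvd b * y" and cong: "[a * x^2 = b * y^2] (mod p)"
  shows "Legendre (a * b) p = 1"
proof -
  have cong': "[(a * b) * x^2 = (b * y)^2] (mod p)"
    using cong_mult[OF cong_refl[of b] cong] by (simp add: power2_eq_square ac_simps)
  have "\<not> p dvd (b * y)^2"
    using assms(3) p(1) by (simp add: prime_dvd_power_iff)
  then have "\<not> p dvd x"
    using cong_dvd_iff[OF cong'] by (auto simp: power2_eq_square)
  have "Legendre (a * b) p = Legendre ((a * b) * x^2) p"
    using Legendre_mult_power2[OF p \<open>\<not> p dvd x\<close>] by simp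
  also have "\<dots> = Legendre ((b * y)^2) p"
    using Legendre_cong[OF cong'] .
  also have "\<dots> = 1"
    using Legendre_power2[OF p(1) assms(3)] .
  finally show ?thesis .
qed

lemma Legendre_rat_of_int_div:
  fixes A B p :: int
  assumes p: "prime p" "2 < p" and B: "\<not> p dvd B"
  shows "Legendre_rat (of_int A / of_int B) p = Legendre (A * B) p"
proof -
  obtain a b where q: "quotient_of (of_int A / of_int B) = (a, b)"
    by fastforce
  have "b > 0" "coprime a b"
    using quotient_of_denom_pos[OF q] quotient_of_coprime[OF q] by auto
  have "B \<noteq> 0"
    using B by auto
  have "(of_int A / of_int B :: rat) = of_int a / of_int b"
    using quotient_of_div[OF q] .
  then have "(of_int (a * B) :: rat) = of_int (b * A)"
    using \<open>b > 0\<close> \<open>B \<noteq> 0\<close> by (simp add: field_simps)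
  then have aB: "a * B = b * A"
    by (simp only: of_int_eq_iff)
  then have "b dvd a * B"
    by simp
  then have "b dvd B"
    using coprime_dvd_mult_right_iff[of b a B] \<open>coprime a b\<close> by (simp add: coprime_commute)
  then obtain k where k: "B = b * k"
    by blast
  have "A = a * k"
    using aB \<open>b > 0\<close> unfolding k by (simp add: algebra_simps)
  have "\<not> p dvd k"
    using B k by auto
  have "Legendre (A * B) p = Legendre ((a * b) * k^2) p"
    unfolding k \<open>A = a * k\<close> by (simp add: power2_eq_square ac_simps)
  also have "\<dots> = Legendre (a * b) p"
    using Legendre_mult_power2[OF p \<open>\<not> p dvd k\<close>] .
  finally show ?thesis
    unfolding Legendre_rat_def q by simp
qed

section \<open>Square roots in \<open>\<int>\<^sub>p\<close>\<close>

lemma square_root_lift: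
  fixes p a y :: int
  assumes p: "prime p" "2 < p" and y: "\<not> p dvd y" and root: "[y^2 = a] (mod p^Suc k)"
  shows "\<exists>z. [z = y] (mod p^Suc k) \<and> [z^2 = a] (mod p^Suc (Suc k))"
proof -
  obtain c where c: "y^2 - a = p^Suc k * c"
    using root by (auto simp: cong_iff_dvd_diff dvd_def)
  have "\<not> p dvd 2"
    using p(2) zdvd_imp_le[of p 2] by auto
  then have "\<not> p dvd 2 * y"
    using p(1) y by (simp add: prime_dvd_mult_iff)
  then have "coprime (2 * y) p"
    using prime_imp_coprime[OF p(1)] coprime_commute by blast
  then obtain f where f: "[2 * y * f = 1] (mod p)"
    using cong_solve_coprime_int by blast
  define s where "s = - c * f"
  have "[2 * y * s = - c * (2 * y * f)] (mod p)"
    by (simp add: s_def ac_simps)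
  also have "[- c * (2 * y * f) = - c * 1] (mod p)"
    by (rule cong_mult[OF cong_refl f])
  finally have s: "[2 * y * s = - c] (mod p)"
    by simp
  define z where "z = y + p^Suc k * s"
  have "z^2 - a = p^Suc k * (c + 2 * y * s) + p^Suc k * p^Suc k * s^2"
    using c by (simp add: z_def power2_eq_square algebra_simps)
  moreover have "p^Suc (Suc k) dvd p^Suc k * (c + 2 * y * s)"
    using s by (simp add: cong_iff_dvd_diff add.commute)
  moreover have "p^Suc (Suc k) dvd p^Suc k * p^Suc k * s^2"
    by (simp add: le_imp_power_dvd flip: power_add)
  ultimately have "[z^2 = a] (mod p^Suc (Suc k))"
    by (simp add: cong_iff_dvd_diff)
  moreover have "[z = y] (mod p^Suc k)"
    by (simp add: z_def cong_iff_dvd_diff)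
  ultimately show ?thesis
    by blast
qed

definition padic_coherent :: "int \<Rightarrow> (nat \<Rightarrow> int) \<Rightarrow> bool" where
  "padic_coherent p x \<longleftrightarrow> (\<forall>k. [x (Suc k) = x k] (mod p ^ k))"

definition padic_square :: "int \<Rightarrow> int \<Rightarrow> bool" where
  "padic_square p a \<longleftrightarrow> (\<exists>r. padic_coherent p r \<and> (\<forall>k. [(r k)^2 = a] (mod p ^ k)))"

lemma padic_square_power2: "padic_square p (c^2)"
  unfolding padic_square_def padic_coherent_def by (rule exI[of _ "\<lambda>_. c"]) simp

lemma padic_square_if_Legendre:
  fixes p a :: int
  assumes p: "prime p" "2 < p" and a: "Legendre a p = 1"
  shows "padic_square p a"
proof -
  define P where "P k y \<longleftrightarrow> \<not> p dvd y \<and> [y^2 = a] (mod p^Suc k)" for k y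
  define Q where "Q k y z \<longleftrightarrow> [z = y] (mod p^Suc k)" for k :: nat and y z :: int
  obtain y where y: "[y^2 = a] (mod p)" and "\<not> p dvd a"
    using a by (auto simp: Legendre_eq_1_iff)
  then have "\<not> p dvd y"
    using cong_dvd_iff[OF y] by (auto simp: power2_eq_square)
  with y have "\<exists>y. P 0 y"
    unfolding P_def by auto
  moreover have "\<exists>z. P (Suc k) z \<and> Q k y z" if "P k y" for k y
  proof -
    obtain z where z: "[z = y] (mod p^Suc k)" "[z^2 = a] (mod p^Suc (Suc k))"
      using square_root_lift[OF p] \<open>P k y\<close> unfolding P_def by blast
    have "[z = y] (mod p)"
      using z(1) by (rule cong_dvd_modulus) simp
    then have "\<not> p dvd z"
      using \<open>P k y\<close> cong_dvd_iff unfolding P_def by blast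
    with z show ?thesis
      unfolding P_def Q_def by blast
  qed
  ultimately obtain r where r: "\<And>k. P k (r k) \<and> Q k (r k) (r (Suc k))"
    using dependent_nat_choice[of P Q] by blast
  have weaken: "[u = v] (mod p^k)" if "[u = v] (mod p^Suc k)" for u v k
    using that by (rule cong_dvd_modulus) (simp add: le_imp_power_dvd)
  have "padic_coherent p r"
    using r weaken unfolding padic_coherent_def Q_def by blast
  moreover have "[(r k)^2 = a] (mod p^k)" for k
    using r weaken unfolding P_def by blast
  ultimately show ?thesis
    unfolding padic_square_def by blast
qed

lemma padic_int_mod_powers:
  fixes p :: int
  assumes "p > 0" "padic_coherent p x"
  shows "padic_int p (\<lambda>k. x k mod p^k)"
  unfolding padic_int_def
proof (intro conjI allI)
  fix k
  show "0 \<le> x k mod p^k" "x k mod p^k < p^k"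
    using assms(1) by simp_all
  have "[x (Suc k) mod p^Suc k = x (Suc k)] (mod p^k)"
    by (rule cong_dvd_modulus[of _ _ "p^Suc k"]) (auto simp: cong_def)
  also have "[x (Suc k) = x k] (mod p^k)"
    using assms(2) by (simp add: padic_coherent_def)
  also have "[x k = x k mod p^k] (mod p^k)"
    by (simp add: cong_def)
  finally show "[x (Suc k) mod p^Suc k = x k mod p^k] (mod p^k)" .
qed

lemma D_has_Qp_point_rotate:
  "D_has_Qp_point e2 e3 e1 d2 d3 d1 n p = D_has_Qp_point e1 e2 e3 d1 d2 d3 n p"
  unfolding D_has_Qp_point_def by blast

text \<open>The numbers \<open>a, b\<^sub>1, b\<^sub>2, b\<^sub>3\<close> are the values of \<open>t\<^sup>2, u\<^sub>1\<^sup>2, u\<^sub>2\<^sup>2, u\<^sub>3\<^sup>2\<close>.\<close>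

lemma D_has_Qp_point_if_padic_squares:
  fixes e1 e2 e3 d1 d2 d3 n p a b1 b2 b3 :: int
  assumes "p > 0"
    and squares: "padic_square p a" "padic_square p b1" "padic_square p b2" "padic_square p b3"
    and primitive: "\<not> p dvd a \<or> \<not> p dvd b1 \<or> \<not> p dvd b2 \<or> \<not> p dvd b3"
    and "e1 * n * a + d2 * b2 - d3 * b3 = 0"
    and "e2 * n * a + d3 * b3 - d1 * b1 = 0"
    and "e3 * n * a + d1 * b1 - d2 * b2 = 0"
  shows "D_has_Qp_point e1 e2 e3 d1 d2 d3 n p"
proof -
  obtain t u1 u2 u3 where coherent:
      "padic_coherent p t" "padic_coherent p u1" "padic_coherent p u2" "padic_coherent p u3"
    and roots: "\<And>k. [(t k)^2 = a] (mod p^k)" "\<And>k. [(u1 k)^2 = b1] (mod p^k)"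
      "\<And>k. [(u2 k)^2 = b2] (mod p^k)" "\<And>k. [(u3 k)^2 = b3] (mod p^k)"
    using squares unfolding padic_square_def by metis
  define reduce :: "(nat \<Rightarrow> int) \<Rightarrow> nat \<Rightarrow> int" where "reduce x k = x k mod p^k" for x k
  have reduce_root: "[(reduce x k)^2 = c] (mod p^k)" if "[(x k)^2 = c] (mod p^k)" for x k c
    using that unfolding reduce_def cong_def by (simp add: power_mod)
  have unit: "padic_unit p (reduce x)" if "[(x 1)^2 = c] (mod p)" "\<not> p dvd c" for x c
  proof -
    have "\<not> p dvd x 1"
      using that cong_dvd_iff[OF that(1)] by (auto simp: power2_eq_square)
    then show ?thesis
      unfolding padic_unit_def reduce_def by (simp add: cong_0_iff dvd_mod_iff)
  qed
  show ?thesis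
    unfolding D_has_Qp_point_def
  proof (intro exI conjI allI)
    show "padic_int p (reduce t)" "padic_int p (reduce u1)" "padic_int p (reduce u2)"
      "padic_int p (reduce u3)"
      using padic_int_mod_powers[OF \<open>p > 0\<close>] coherent unfolding reduce_def by auto
    show "padic_unit p (reduce t) \<or> padic_unit p (reduce u1) \<or> padic_unit p (reduce u2)
        \<or> padic_unit p (reduce u3)"
      using primitive unit roots[of 1] by auto
    fix k
    have t: "[(reduce t k)^2 = a] (mod p^k)" and u1: "[(reduce u1 k)^2 = b1] (mod p^k)"
      and u2: "[(reduce u2 k)^2 = b2] (mod p^k)" and u3: "[(reduce u3 k)^2 = b3] (mod p^k)"
      using reduce_root roots by blast+
    have "[e1 * n * (reduce t k)^2 + d2 * (reduce u2 k)^2 - d3 * (reduce u3 k)^2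
         = e1 * n * a + d2 * b2 - d3 * b3] (mod p^k)"
      using t u2 u3 by (intro cong_add cong_diff cong_mult cong_refl)
    then show "[e1 * n * (reduce t k)^2 + d2 * (reduce u2 k)^2 - d3 * (reduce u3 k)^2 = 0] (mod p^k)"
      using assms(7) by simp
    have "[e2 * n * (reduce t k)^2 + d3 * (reduce u3 k)^2 - d1 * (reduce u1 k)^2
         = e2 * n * a + d3 * b3 - d1 * b1] (mod p^k)"
      using t u3 u1 by (intro cong_add cong_diff cong_mult cong_refl)
    then show "[e2 * n * (reduce t k)^2 + d3 * (reduce u3 k)^2 - d1 * (reduce u1 k)^2 = 0] (mod p^k)"
      using assms(8) by simp
    have "[e3 * n * (reduce t k)^2 + d1 * (reduce u1 k)^2 - d2 * (reduce u2 k)^2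
         = e3 * n * a + d1 * b1 - d2 * b2] (mod p^k)"
      using t u1 u2 by (intro cong_add cong_diff cong_mult cong_refl)
    then show "[e3 * n * (reduce t k)^2 + d1 * (reduce u1 k)^2 - d2 * (reduce u2 k)^2 = 0] (mod p^k)"
      using assms(9) by simp
  qed
qed

lemma D_has_Qp_point_primitive_mod_p2:
  fixes e1 e2 e3 d1 d2 d3 n p :: int
  assumes "D_has_Qp_point e1 e2 e3 d1 d2 d3 n p"
  obtains T U1 U2 U3 where "\<not> p dvd T \<or> \<not> p dvd U1 \<or> \<not> p dvd U2 \<or> \<not> p dvd U3"
    "[e1 * n * T^2 + d2 * U2^2 - d3 * U3^2 = 0] (mod p^2)"
    "[e2 * n * T^2 + d3 * U3^2 - d1 * U1^2 = 0] (mod p^2)"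
    "[e3 * n * T^2 + d1 * U1^2 - d2 * U2^2 = 0] (mod p^2)"
proof -
  obtain t u1 u2 u3 where
    padic: "padic_int p t" "padic_int p u1" "padic_int p u2" "padic_int p u3"
    and unit: "padic_unit p t \<or> padic_unit p u1 \<or> padic_unit p u2 \<or> padic_unit p u3"
    and eqs: "\<And>k. [e1 * n * (t k)^2 + d2 * (u2 k)^2 - d3 * (u3 k)^2 = 0] (mod p^k)"
      "\<And>k. [e2 * n * (t k)^2 + d3 * (u3 k)^2 - d1 * (u1 k)^2 = 0] (mod p^k)"
      "\<And>k. [e3 * n * (t k)^2 + d1 * (u1 k)^2 - d2 * (u2 k)^2 = 0] (mod p^k)"
    using assms unfolding D_has_Qp_point_def by blast
  have level2: "\<not> p dvd x 2" if "padic_int p x" "padic_unit p x" for x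
  proof -
    have "[x (Suc 1) = x 1] (mod p^1)"
      using that(1) unfolding padic_int_def by blast
    then show ?thesis
      using that(2) unfolding padic_unit_def by (simp add: cong_0_iff cong_dvd_iff numeral_2_eq_2)
  qed
  show ?thesis
    using that[of "t 2" "u1 2" "u2 2" "u3 2"] eqs[of 2] unit level2 padic by blast
qed

lemma cong_0_cancel_multiple:
  fixes m A X Y :: int
  assumes "[A + X - Y = 0] (mod m)" "m dvd A"
  shows "[X = Y] (mod m)"
proof -
  have "m dvd (A + X - Y) - A"
    using assms unfolding cong_0_iff by (rule dvd_diff)
  then show ?thesis
    by (simp add: cong_iff_dvd_diff)
qed

section \<open>The case \<open>p \<nmid> d\<^sub>1d\<^sub>2d\<^sub>3\<close>\<close>

lemma Legendre_eq_1_if_D_has_Qp_point_unramified: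
  fixes e1 e2 e3 d1 d2 d3 n p m :: int
  assumes p: "prime p" "2 < p" and n: "p dvd n" "\<not> p^2 dvd n" and e1: "\<not> p dvd e1"
    and d: "\<not> p dvd d1 * d2 * d3" and m: "d1 * d2 * d3 = m^2"
    and "D_has_Qp_point e1 e2 e3 d1 d2 d3 n p"
  shows "Legendre d1 p = 1 \<and> Legendre d2 p = 1 \<and> Legendre d3 p = 1"
proof -
  obtain T U1 U2 U3 where primitive: "\<not> p dvd T \<or> \<not> p dvd U1 \<or> \<not> p dvd U2 \<or> \<not> p dvd U3"
    and eq1: "[e1 * n * T^2 + d2 * U2^2 - d3 * U3^2 = 0] (mod p^2)"
    and eq2: "[e2 * n * T^2 + d3 * U3^2 - d1 * U1^2 = 0] (mod p^2)"
    and eq3: "[e3 * n * T^2 + d1 * U1^2 - d2 * U2^2 = 0] (mod p^2)"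
    by (rule D_has_Qp_point_primitive_mod_p2[OF assms(8)])
  have mod_p: "[A + X - Y = 0] (mod p)" if "[A + X - Y = 0] (mod p^2)" for A X Y
    using that by (rule cong_dvd_modulus) simp
  have c23: "[d2 * U2^2 = d3 * U3^2] (mod p)"
    using cong_0_cancel_multiple[OF mod_p[OF eq1]] n(1) by simp
  have c31: "[d3 * U3^2 = d1 * U1^2] (mod p)"
    using cong_0_cancel_multiple[OF mod_p[OF eq2]] n(1) by simp
  have c12: "[d1 * U1^2 = d2 * U2^2] (mod p)"
    using cong_0_cancel_multiple[OF mod_p[OF eq3]] n(1) by simp
  have d_units: "\<not> p dvd d1" "\<not> p dvd d2" "\<not> p dvd d3"
    using d by auto
  have dvd_iff: "p dvd di * U^2 \<longleftrightarrow> p dvd U" if "\<not> p dvd di" for di U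
    using that p(1) by (simp add: prime_dvd_mult_iff prime_dvd_power_iff)
  have same_dvd: "p dvd U1 \<longleftrightarrow> p dvd U2" "p dvd U2 \<longleftrightarrow> p dvd U3"
    using cong_dvd_iff[OF c12] cong_dvd_iff[OF c23] dvd_iff d_units by auto
  have "\<not> p dvd U2"
  proof
    assume "p dvd U2"
    then have "p dvd U1" "p dvd U3" "\<not> p dvd T"
      using same_dvd primitive by auto
    have "p^2 dvd d2 * U2^2 - d3 * U3^2"
      using \<open>p dvd U2\<close> \<open>p dvd U3\<close> by (simp add: dvd_diff)
    with eq1 have "p^2 dvd (e1 * n * T^2 + d2 * U2^2 - d3 * U3^2) - (d2 * U2^2 - d3 * U3^2)"
      unfolding cong_0_iff by (rule dvd_diff)
    then have "p^2 dvd (e1 * T^2) * n"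
      by (simp add: algebra_simps)
    moreover have "coprime (p^2) (e1 * T^2)"
      using \<open>\<not> p dvd T\<close> e1 p(1)
      by (simp add: prime_imp_coprime prime_dvd_mult_iff prime_dvd_power_iff)
    ultimately show False
      using n(2) coprime_dvd_mult_right_iff by blast
  qed
  then have units: "\<not> p dvd U1" "\<not> p dvd U2" "\<not> p dvd U3"
    using same_dvd by auto
  have unit_mult: "\<not> p dvd di * U" if "\<not> p dvd di" "\<not> p dvd U" for di U
    using that p(1) by (simp add: prime_dvd_mult_iff)
  have L23: "Legendre (d2 * d3) p = 1"
    using Legendre_eq_1_if_cong_square_multiples[OF p unit_mult[OF d_units(3) units(3)] c23] .
  have L31: "Legendre (d3 * d1) p = 1"
    using Legendre_eq_1_if_cong_square_multiples[OF p unit_mult[OF d_units(1) units(1)] c31] .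
  have L12: "Legendre (d1 * d2) p = 1"
    using Legendre_eq_1_if_cong_square_multiples[OF p unit_mult[OF d_units(2) units(2)] c12] .
  have "\<not> p dvd m"
    using d p(1) by (simp add: m prime_dvd_power_iff)
  then have L123: "Legendre (d1 * d2 * d3) p = 1"
    using Legendre_power2[OF p(1)] by (simp add: m)
  show ?thesis
    using L123 L12 L23 L31 by (auto simp: Legendre_mult[OF p] mult.assoc)
qed

lemma D_has_Qp_point_if_Legendre_unramified:
  fixes e1 e2 e3 d1 d2 d3 n p :: int
  assumes p: "prime p" "2 < p"
    and L: "Legendre d1 p = 1" "Legendre d2 p = 1" "Legendre d3 p = 1"
  shows "D_has_Qp_point e1 e2 e3 d1 d2 d3 n p"
  \<comment> \<open>\<open>t = 0\<close> and \<open>u\<^sub>1 = \<surd>(d\<^sub>2d\<^sub>3)\<close>, \<open>u\<^sub>2 = \<surd>(d\<^sub>3d\<^sub>1)\<close>, \<open>u\<^sub>3 = \<surd>(d\<^sub>1d\<^sub>2)\<close>\<close>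
proof (rule D_has_Qp_point_if_padic_squares)
  show "p > 0"
    using p(2) by simp
  show "padic_square p (0^2)"
    by (rule padic_square_power2)
  show "padic_square p (d2 * d3)" "padic_square p (d3 * d1)" "padic_square p (d1 * d2)"
    using L by (simp_all add: padic_square_if_Legendre p Legendre_mult)
  show "\<not> p dvd 0^2 \<or> \<not> p dvd d2 * d3 \<or> \<not> p dvd d3 * d1 \<or> \<not> p dvd d1 * d2"
    using L p(1) by (simp add: Legendre_eq_1_iff prime_dvd_mult_iff)
qed (simp_all add: algebra_simps)

lemma D_has_Qp_point_iff_unramified:
  fixes e1 e2 e3 d1 d2 d3 n p m :: int
  assumes p: "prime p" "2 < p" and "p dvd n" "\<not> p^2 dvd n" "\<not> p dvd e1"
    and "\<not> p dvd d1 * d2 * d3" "d1 * d2 * d3 = m^2"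
  shows "D_has_Qp_point e1 e2 e3 d1 d2 d3 n p
    \<longleftrightarrow> Legendre d1 p = 1 \<and> Legendre d2 p = 1 \<and> Legendre d3 p = 1"
  using Legendre_eq_1_if_D_has_Qp_point_unramified[OF assms]
    D_has_Qp_point_if_Legendre_unramified[OF p] by blast

section \<open>The case \<open>p | d\<^sub>2\<close>, \<open>p | d\<^sub>3\<close>\<close>

lemma Legendre_eq_1_if_D_has_Qp_point_ramified:
  fixes e1 e2 e3 d1 d2 d3 n p m :: int
  assumes p: "prime p" "2 < p" and e: "\<not> p dvd e2" "\<not> p dvd e3" and "\<not> p dvd n"
    and d: "\<not> p dvd d1" "\<not> p dvd d2" "\<not> p dvd d3" and m: "d1 * d2 * d3 = m^2"
    and "D_has_Qp_point e1 e2 e3 d1 (p * d2) (p * d3) (p * n) p"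
  shows "Legendre (- e2 * e3 * d1) p = 1 \<and> Legendre (e3 * n * d2) p = 1
    \<and> Legendre (- e2 * n * d3) p = 1"
proof -
  obtain T U1 U2 U3 where primitive: "\<not> p dvd T \<or> \<not> p dvd U1 \<or> \<not> p dvd U2 \<or> \<not> p dvd U3"
    and "[e1 * (p * n) * T^2 + p * d2 * U2^2 - p * d3 * U3^2 = 0] (mod p^2)"
    and eq2: "[e2 * (p * n) * T^2 + p * d3 * U3^2 - d1 * U1^2 = 0] (mod p^2)"
    and eq3: "[e3 * (p * n) * T^2 + d1 * U1^2 - p * d2 * U2^2 = 0] (mod p^2)"
    by (rule D_has_Qp_point_primitive_mod_p2[OF assms(10)])
  define X2 where "X2 = e2 * n * T^2 + d3 * U3^2"
  define X3 where "X3 = e3 * n * T^2 - d2 * U2^2"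
  have eq2': "[p * X2 - d1 * U1^2 = 0] (mod p^2)" and eq3': "[p * X3 + d1 * U1^2 = 0] (mod p^2)"
    using eq2 eq3 unfolding X2_def X3_def by (simp_all add: algebra_simps)
  have "p dvd d1 * U1^2"
    using cong_dvd_modulus[OF eq2', of p] by (simp add: cong_0_iff dvd_diff_right_iff)
  then have "p^2 dvd d1 * U1^2" and "p dvd U1"
    using d(1) p(1) by (simp_all add: prime_dvd_mult_iff prime_dvd_power_iff dvd_power_same)
  then have "p^2 dvd (p * X2 - d1 * U1^2) + d1 * U1^2" "p^2 dvd (p * X3 + d1 * U1^2) - d1 * U1^2"
    using eq2' eq3' unfolding cong_0_iff by (simp_all only: dvd_add dvd_diff)
  then have "p * p dvd p * X2" "p * p dvd p * X3"
    by (simp_all add: power2_eq_square)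
  then have X2: "p dvd X2" and X3: "p dvd X3"
    using p(1) by simp_all
  have dvd_iff: "p dvd di * U^2 \<longleftrightarrow> p dvd U" if "\<not> p dvd di" for di U
    using that p(1) by (simp add: prime_dvd_mult_iff prime_dvd_power_iff)
  have "\<not> p dvd T"
  proof
    assume "p dvd T"
    then have "p dvd e * n * T^2" for e
      by (simp add: power2_eq_square)
    then have "p dvd d3 * U3^2" "p dvd d2 * U2^2"
      using X2 X3 unfolding X2_def X3_def by (simp_all add: dvd_add_right_iff dvd_diff_right_iff)
    then show False
      using primitive \<open>p dvd T\<close> \<open>p dvd U1\<close> dvd_iff d by blast
  qed
  then have nT: "\<not> p dvd e * n * T^2" if "\<not> p dvd e" for e
    using that \<open>\<not> p dvd n\<close> p(1) by (simp add: prime_dvd_mult_iff prime_dvd_power_iff)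
  have "\<not> p dvd U2"
  proof
    assume "p dvd U2"
    then have "p dvd d2 * U2^2"
      by (simp add: power2_eq_square)
    then show False
      using X3 nT[OF e(2)] unfolding X3_def by (simp add: dvd_diff_left_iff)
  qed
  have "\<not> p dvd U3"
  proof
    assume "p dvd U3"
    then have "p dvd d3 * U3^2"
      by (simp add: power2_eq_square)
    then show False
      using X2 nT[OF e(1)] unfolding X2_def by (simp add: dvd_add_left_iff)
  qed
  have "[e3 * n * T^2 = d2 * U2^2] (mod p)"
    using X3 unfolding X3_def by (simp add: cong_iff_dvd_diff)
  moreover have "\<not> p dvd d2 * U2"
    using \<open>\<not> p dvd U2\<close> d(2) p(1) by (simp add: prime_dvd_mult_iff)
  ultimately have L3: "Legendre (e3 * n * d2) p = 1"
    by (intro Legendre_eq_1_if_cong_square_multiples[OF p])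
  have "- e2 * n * T^2 - d3 * U3^2 = - X2"
    unfolding X2_def by simp
  then have "[- e2 * n * T^2 = d3 * U3^2] (mod p)"
    using X2 by (simp add: cong_iff_dvd_diff)
  moreover have "\<not> p dvd d3 * U3"
    using \<open>\<not> p dvd U3\<close> d(3) p(1) by (simp add: prime_dvd_mult_iff)
  ultimately have L2: "Legendre (- e2 * n * d3) p = 1"
    by (intro Legendre_eq_1_if_cong_square_multiples[OF p])
  have ndd: "\<not> p dvd n * d2 * d3" and "\<not> p dvd m^2"
    using d \<open>\<not> p dvd n\<close> p(1) by (simp_all add: prime_dvd_mult_iff flip: m)
  then have "\<not> p dvd m"
    using dvd_mult2[of p m m] by (auto simp: power2_eq_square)
  have "Legendre (- e2 * e3 * d1) p = Legendre ((- e2 * e3 * d1) * (n * d2 * d3)^2) p"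
    by (rule Legendre_mult_power2[OF p ndd, symmetric])
  also have "(- e2 * e3 * d1) * (n * d2 * d3)^2 = (e3 * n * d2) * (- e2 * n * d3) * m^2"
    unfolding m[symmetric] by (simp add: power2_eq_square algebra_simps)
  also have "Legendre \<dots> p = Legendre ((e3 * n * d2) * (- e2 * n * d3)) p"
    by (rule Legendre_mult_power2[OF p \<open>\<not> p dvd m\<close>])
  also have "\<dots> = 1"
    using L2 L3 Legendre_mult[OF p, of "e3 * n * d2" "- e2 * n * d3"] by simp
  finally show ?thesis
    using L2 L3 by blast
qed

lemma D_has_Qp_point_if_Legendre_ramified:
  fixes e1 e2 e3 d1 d2 d3 n p :: int
  assumes p: "prime p" "2 < p" and e: "e1 + e2 + e3 = 0" and d: "\<not> p dvd d2" "\<not> p dvd d3"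
    and L: "Legendre (e3 * n * d2) p = 1" "Legendre (- e2 * n * d3) p = 1"
  shows "D_has_Qp_point e1 e2 e3 d1 (p * d2) (p * d3) (p * n) p"
  \<comment> \<open>\<open>t = d\<^sub>2d\<^sub>3\<close>, \<open>u\<^sub>1 = 0\<close>, \<open>u\<^sub>2 = d\<^sub>3\<surd>(e\<^sub>3nd\<^sub>2)\<close>, \<open>u\<^sub>3 = d\<^sub>2\<surd>(-e\<^sub>2nd\<^sub>3)\<close>\<close>
proof (rule D_has_Qp_point_if_padic_squares)
  show "p > 0"
    using p(2) by simp
  show "padic_square p ((d2 * d3)^2)" "padic_square p (0^2)"
    by (rule padic_square_power2)+
  have "Legendre ((e3 * n * d2) * d3^2) p = 1" "Legendre ((- e2 * n * d3) * d2^2) p = 1"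
    using L Legendre_mult_power2[OF p d(2), of "e3 * n * d2"]
      Legendre_mult_power2[OF p d(1), of "- e2 * n * d3"] by simp_all
  then show "padic_square p ((e3 * n * d2) * d3^2)" "padic_square p ((- e2 * n * d3) * d2^2)"
    by (simp_all only: padic_square_if_Legendre[OF p])
  show "\<not> p dvd (d2 * d3)^2 \<or> \<not> p dvd 0^2 \<or> \<not> p dvd (e3 * n * d2) * d3^2
      \<or> \<not> p dvd (- e2 * n * d3) * d2^2"
    using d p(1) by (simp add: prime_dvd_mult_iff prime_dvd_power_iff)
  have "e1 * (p * n) * (d2 * d3)^2 + p * d2 * ((e3 * n * d2) * d3^2)
      - p * d3 * ((- e2 * n * d3) * d2^2) = p * n * (d2 * d3)^2 * (e1 + e2 + e3)"
    by (simp add: power2_eq_square algebra_simps)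
  then show "e1 * (p * n) * (d2 * d3)^2 + p * d2 * ((e3 * n * d2) * d3^2)
      - p * d3 * ((- e2 * n * d3) * d2^2) = 0"
    using e by simp
qed (simp_all add: power2_eq_square algebra_simps)

lemma exact_divisorE:
  fixes p x :: int
  assumes "p dvd x" "\<not> p^2 dvd x"
  obtains y where "x = p * y" "\<not> p dvd y"
proof -
  obtain y where "x = p * y"
    using assms(1) by blast
  moreover have "\<not> p dvd y"
    using assms(2) calculation by (auto simp: power2_eq_square)
  ultimately show ?thesis
    using that by blast
qed

lemma square_if_mult_square:
  fixes x c m :: int
  assumes "c \<noteq> 0" "x * c^2 = m^2"
  obtains m' where "x = m'^2"
proof -
  have "c^2 dvd m^2"
    using assms(2) by (metis dvd_triv_right)
  then obtain m' where "m = c * m'"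
    by (auto simp: pow_divides_pow_iff)
  then have "x * c^2 = m'^2 * c^2"
    using assms(2) by (simp add: power_mult_distrib)
  then show ?thesis
    using that assms(1) by simp
qed

lemma D_has_Qp_point_iff_ramified:
  fixes e1 e2 e3 d1 d2 d3 n p m :: int
  assumes p: "prime p" "2 < p" and e: "e1 + e2 + e3 = 0" "\<not> p dvd e2" "\<not> p dvd e3"
    and n: "p dvd n" "\<not> p^2 dvd n" and d1: "\<not> p dvd d1"
    and d2: "p dvd d2" "\<not> p^2 dvd d2" and d3: "p dvd d3" "\<not> p^2 dvd d3"
    and m: "d1 * d2 * d3 = m^2"
  shows "D_has_Qp_point e1 e2 e3 d1 d2 d3 n p \<longleftrightarrow>
    Legendre (- e2 * e3 * d1) p = 1 \<and>
    Legendre_rat (of_int e3 * of_int n / of_int d2) p = 1 \<and>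
    Legendre_rat (- of_int e2 * of_int n / of_int d3) p = 1"
proof -
  obtain n' where n': "n = p * n'" "\<not> p dvd n'"
    using n by (rule exact_divisorE)
  obtain d2' where d2': "d2 = p * d2'" "\<not> p dvd d2'"
    using d2 by (rule exact_divisorE)
  obtain d3' where d3': "d3 = p * d3'" "\<not> p dvd d3'"
    using d3 by (rule exact_divisorE)
  have "p \<noteq> 0"
    using p(1) by auto
  have "(d1 * d2' * d3') * p^2 = m^2"
    using m by (simp add: d2' d3' power2_eq_square algebra_simps)
  then obtain m' where m': "d1 * d2' * d3' = m'^2"
    by (rule square_if_mult_square[OF \<open>p \<noteq> 0\<close>])
  have "(of_int e3 * of_int n / of_int d2 :: rat) = of_int (e3 * n') / of_int d2'"
    and "(- of_int e2 * of_int n / of_int d3 :: rat) = of_int (- e2 * n') / of_int d3'"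
    using \<open>p \<noteq> 0\<close> by (simp_all add: n' d2' d3')
  then have "Legendre_rat (of_int e3 * of_int n / of_int d2) p = Legendre (e3 * n' * d2') p"
    and "Legendre_rat (- of_int e2 * of_int n / of_int d3) p = Legendre (- e2 * n' * d3') p"
    using Legendre_rat_of_int_div[OF p d2'(2), of "e3 * n'"]
      Legendre_rat_of_int_div[OF p d3'(2), of "- e2 * n'"] by (simp_all only:)
  moreover have "D_has_Qp_point e1 e2 e3 d1 d2 d3 n p \<longleftrightarrow>
      Legendre (- e2 * e3 * d1) p = 1 \<and> Legendre (e3 * n' * d2') p = 1 \<and>
      Legendre (- e2 * n' * d3') p = 1"
    unfolding n'(1) d2'(1) d3'(1)
    using Legendre_eq_1_if_D_has_Qp_point_ramified[OF p e(2,3) n'(2) d1 d2'(2) d3'(2) m']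
      D_has_Qp_point_if_Legendre_ramified[OF p e(1) d2'(2) d3'(2)] by blast
  ultimately show ?thesis
    by simp
qed

theorem lemma2p5:
  fixes e1 e2 e3 d1 d2 d3 n p :: int
  assumes "e1 \<noteq> 0" "e2 \<noteq> 0" "e3 \<noteq> 0" "e1 + e2 + e3 = 0"
    and "d1 \<noteq> 0" "d2 \<noteq> 0" "d3 \<noteq> 0"
    and "squarefree d1" "squarefree d2" "squarefree d3"
    and "\<exists>m::int. d1 * d2 * d3 = m ^ 2"
    and "n > 0" "squarefree n" "coprime n (e1 * e2 * e3)"
    and "prime p" "odd p" "p dvd n"
  shows
    "(\<not> p dvd d1 * d2 * d3 \<longrightarrow>
        (D_has_Qp_point e1 e2 e3 d1 d2 d3 n p \<longleftrightarrow>
           Legendre d1 p = 1 \<and> Legendre d2 p = 1 \<and> Legendre d3 p = 1)) \<and>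
     (\<not> p dvd d1 \<and> p dvd d2 \<and> p dvd d3 \<longrightarrow>
        (D_has_Qp_point e1 e2 e3 d1 d2 d3 n p \<longleftrightarrow>
           Legendre (- e2 * e3 * d1) p = 1 \<and>
           Legendre_rat (of_int e3 * of_int n / of_int d2) p = 1 \<and>
           Legendre_rat (- of_int e2 * of_int n / of_int d3) p = 1)) \<and>
     (p dvd d1 \<and> \<not> p dvd d2 \<and> p dvd d3 \<longrightarrow>
        (D_has_Qp_point e1 e2 e3 d1 d2 d3 n p \<longleftrightarrow>
           Legendre_rat (- of_int e3 * of_int n / of_int d1) p = 1 \<and>
           Legendre (- e3 * e1 * d2) p = 1 \<and>
           Legendre_rat (of_int e1 * of_int n / of_int d3) p = 1)) \<and>
     (p dvd d1 \<and> p dvd d2 \<and> \<not> p dvd d3 \<longrightarrow>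
        (D_has_Qp_point e1 e2 e3 d1 d2 d3 n p \<longleftrightarrow>
           Legendre_rat (of_int e2 * of_int n / of_int d1) p = 1 \<and>
           Legendre_rat (- of_int e1 * of_int n / of_int d2) p = 1 \<and>
           Legendre (- e1 * e2 * d3) p = 1))"
proof -
  obtain m where m: "d1 * d2 * d3 = m^2" "d2 * d3 * d1 = m^2" "d3 * d1 * d2 = m^2"
    using assms(11) by (auto simp: ac_simps)
  have esum: "e1 + e2 + e3 = 0" "e2 + e3 + e1 = 0" "e3 + e1 + e2 = 0"
    using assms(4) by simp_all
  have p: "prime p" "2 < p"
    using assms(15,16) prime_ge_2_int[of p] by (auto simp: le_less)
  have sqf: "\<not> p^2 dvd x" if "squarefree x" for x
    using that p(1) not_prime_unit unfolding squarefree_def by blast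
  have e: "\<not> p dvd e1" "\<not> p dvd e2" "\<not> p dvd e3"
    using assms(14,17) p(1) coprime_common_divisor not_prime_unit by (auto simp: dvd_mult2 dvd_mult)
  note rotate = D_has_Qp_point_rotate[of e1 e2 e3 d1 d2 d3 n p]
    D_has_Qp_point_rotate[of e2 e3 e1 d2 d3 d1 n p]
  note n = assms(17) sqf[OF assms(13)]
  show ?thesis
    using D_has_Qp_point_iff_unramified[OF p n e(1) _ m(1)]
      D_has_Qp_point_iff_ramified[OF p esum(1) e(2,3) n _ _ sqf[OF assms(9)] _ sqf[OF assms(10)] m(1)]
      D_has_Qp_point_iff_ramified[OF p esum(2) e(3,1) n _ _ sqf[OF assms(10)] _ sqf[OF assms(8)] m(2)]
      D_has_Qp_point_iff_ramified[OF p esum(3) e(1,2) n _ _ sqf[OF assms(8)] _ sqf[OF assms(9)] m(3)]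
      rotate by auto
qed

end
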